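(* Let $\mathcal{N}$ be a real affine space and let $D$ be a convex subset of $\mathbb{R}\times\mathcal{N}$. Let $\mathcal{B}:D\to\mathbb{R}$ be continuous on every finite-dimensional affine subset of $D$, and let $c$ be a function on $D$. Suppose that whenever $(\mathbf{f},N),(\mathbf{f}_\pm,N_\pm)\in D$ satisfy $\mathbf{f}=(\mathbf{f}_++\mathbf{f}_-)/2$ and $N=(N_++N_-)/2$, we have $$\frac{\mathcal{B}(\mathbf{f}_+,N_+)+\mathcal{B}(\mathbf{f}_-,N_-)}{2}-\mathcal{B}(\mathbf{f},N)\ge c(\mathbf{f},N)\,|\mathbf{f}_+-\mathbf{f}|^2\ge0 .$$ Then for all $(\mathbf{f}_k,N_k)\in D$ and $\gamma_k\ge0$, $k=1,\dots,n$, with $\sum_{k=1}^n\gamma_k=1$, setting $\mathbf{f}=\sum_k\gamma_k\mathbf{f}_k$ and $N=\sum_k\gamma_kN_k$, we have $$-\mathcal{B}(\mathbf{f},N)+\sum_{k=1}^n\gamma_k\,\mathcal{B}(\mathbf{f}_k,N_k)\ge\frac14\,c(\mathbf{f},N)\Big(\sum_{k=1}^n\gamma_k|\mathbf{f}_k-\mathbf{f}|\Big)^2 .$$ *)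

theory Defs
  imports "HOL-Analysis.Analysis"
begin

text \<open>The affine space N is modelled as a real vector space 'a (an origin chosen).
  A finite-dimensional affine subset of real \<times> 'a lies in the linear span of finitely
  many points p 0, ..., p (m-1); its canonical (Euclidean) topology is the one
  transported along the linear surjection t \<mapsto> sum of t i scaled by p i from R^m.
  Since these spaces are metrizable and the parametrisation is an open surjection,
  continuity of B on D intersected with such a subset is expressed sequentially
  via coefficient sequences.\<close>

definition fd_comb :: "nat \<Rightarrow> (nat \<Rightarrow> 'v::real_vector) \<Rightarrow> (nat \<Rightarrow> real) \<Rightarrow> 'v" where
  "fd_comb m p t = (\<Sum>i<m. t i *\<^sub>R p i)"

definition fin_dim_continuous :: "'v::real_vector set \<Rightarrow> ('v \<Rightarrow> real) \<Rightarrow> bool" where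
  "fin_dim_continuous D B \<longleftrightarrow>
     (\<forall>(m::nat) (p::nat \<Rightarrow> 'v) (t::nat \<Rightarrow> nat \<Rightarrow> real) (s::nat \<Rightarrow> real).
        (\<forall>j. fd_comb m p (t j) \<in> D) \<and> fd_comb m p s \<in> D \<and>
        (\<forall>i<m. (\<lambda>j. t j i) \<longlonglongrightarrow> s i)
        \<longrightarrow> (\<lambda>j. B (fd_comb m p (t j))) \<longlonglongrightarrow> B (fd_comb m p s))"

end

theory Submission imports Defs begin

text \<open>Midpoint convexity together with continuity on segments makes B convex.
  Split the points at the weighted mean f of their first coordinates and replace each
  half by its barycentre (Jensen on each half): this leaves two points P, Q with weights
  \<alpha>, 1 - \<alpha>, each carrying half of the mean deviation S. If \<alpha> \<le> 1/2, the reflection of Q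
  in the barycentre x lies between x and P, so the midpoint inequality at x and convexity
  on [x, P] give a gain of 2 (1 - \<alpha>) c(x) (f_Q - f)^2 \<ge> c(x) S^2 / 4.\<close>

lemma continuous_midpoint_convex_below_chord:
  fixes g :: "real \<Rightarrow> real"
  assumes cont: "continuous_on {0..1} g"
    and mc: "\<And>a b. a \<in> {0..1} \<Longrightarrow> b \<in> {0..1} \<Longrightarrow> g ((a+b)/2) \<le> (g a + g b)/2"
    and t: "t \<in> {0..1}"
  shows "g t \<le> (1-t) * g 0 + t * g 1"
proof (rule ccontr)
  assume neg: "\<not> ?thesis"
  define h where "h s = g s - ((1-s) * g 0 + s * g 1)" for s
  have hc: "continuous_on {0..1} h" unfolding h_def
    by (intro continuous_intros cont)
  have hm: "h ((a+b)/2) \<le> (h a + h b)/2" if "a \<in> {0..1}" "b \<in> {0..1}" for a b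
    using mc[OF that] unfolding h_def by (simp add: field_simps)
  have h0: "h 0 = 0" and h1: "h 1 = 0" unfolding h_def by simp_all
  obtain xm where xm: "xm \<in> {0..1}" "\<And>y. y \<in> {0..1} \<Longrightarrow> h y \<le> h xm"
    using continuous_attains_sup[OF compact_Icc _ hc] by auto
  define M where "M = h xm"
  have Mpos: "M > 0" using xm(2)[OF t] neg unfolding M_def h_def by simp
  \<comment> \<open>The leftmost maximiser t0 is interior, and its midpoint inequality with
     t0 \<plusminus> d fails because h (t0 - d) < M.\<close>
  define T where "T = {s \<in> {0..1}. h s = M}"
  have Tc: "closed T" unfolding T_def
    by (rule continuous_closed_preimage_constant[OF hc closed_atLeastAtMost])
  have Tne: "T \<noteq> {}" using xm unfolding T_def M_def by auto
  have Tb: "bdd_below T" unfolding T_def by (auto intro: bdd_belowI[of _ 0])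
  define t0 where "t0 = Inf T"
  have t0T: "t0 \<in> T" unfolding t0_def by (rule closed_contains_Inf[OF Tne Tb Tc])
  have low: "t0 \<le> s" if "s \<in> T" for s unfolding t0_def using cInf_lower[OF that Tb] .
  have t01: "0 < t0" "t0 < 1" using t0T h0 h1 Mpos unfolding T_def
    by (auto simp: order_le_less)
  define d where "d = min t0 (1-t0)"
  have dpos: "d > 0" using t01 unfolding d_def by simp
  have a01: "t0 - d \<in> {0..1}" and b01: "t0 + d \<in> {0..1}" using t01 unfolding d_def by auto
  have hb: "h (t0+d) \<le> M" using xm(2)[OF b01] unfolding M_def .
  have ha: "h (t0-d) < M"
  proof -
    have "t0 - d \<notin> T" using low[of "t0-d"] dpos by auto
    then have "h (t0-d) \<noteq> M" using a01 unfolding T_def by auto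
    moreover have "h (t0-d) \<le> M" using xm(2)[OF a01] unfolding M_def .
    ultimately show ?thesis by simp
  qed
  have "h t0 \<le> (h (t0-d) + h (t0+d))/2" using hm[OF a01 b01] by simp
  also have "\<dots> < M" using ha hb by simp
  finally show False using t0T unfolding T_def by simp
qed

lemma fin_dim_continuous_on_segment:
  assumes contB: "fin_dim_continuous D B"
    and seg: "\<And>s. s \<in> {0..1} \<Longrightarrow> (1-s) *\<^sub>R x + s *\<^sub>R y \<in> D"
  shows "continuous_on {0..1} (\<lambda>s. B ((1-s) *\<^sub>R x + s *\<^sub>R y))"
proof (rule continuous_on_sequentiallyI)
  fix u :: "nat \<Rightarrow> real" and a :: real
  assume u: "\<forall>n. u n \<in> {0..1}" and a: "a \<in> {0..1}" and lim: "u \<longlonglongrightarrow> a"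
  define p where "p = (\<lambda>i::nat. if i = 0 then x else y)"
  define coeffs where "coeffs = (\<lambda>s::real. \<lambda>i::nat. if i = 0 then 1 - s else s)"
  have fd: "fd_comb 2 p (coeffs s) = (1-s) *\<^sub>R x + s *\<^sub>R y" for s
    by (simp add: fd_comb_def p_def coeffs_def numeral_2_eq_2 lessThan_Suc)
  have "(\<lambda>j. B (fd_comb 2 p (coeffs (u j)))) \<longlonglongrightarrow> B (fd_comb 2 p (coeffs a))"
  proof (rule contB[unfolded fin_dim_continuous_def, rule_format])
    show "(\<forall>j. fd_comb 2 p (coeffs (u j)) \<in> D) \<and> fd_comb 2 p (coeffs a) \<in> D \<and>
        (\<forall>i<2. (\<lambda>j. coeffs (u j) i) \<longlonglongrightarrow> coeffs a i)"
      unfolding fd using u a seg lim by (auto simp: coeffs_def intro: tendsto_intros)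
  qed
  then show "(\<lambda>n. B ((1 - u n) *\<^sub>R x + u n *\<^sub>R y)) \<longlonglongrightarrow> B ((1 - a) *\<^sub>R x + a *\<^sub>R y)"
    by (simp add: fd)
qed

lemma midpoint_convex_imp_convex_on:
  fixes B :: "'v::real_vector \<Rightarrow> real"
  assumes convD: "convex D" and contB: "fin_dim_continuous D B"
    and mc: "\<And>u v. u \<in> D \<Longrightarrow> v \<in> D \<Longrightarrow> B (midpoint u v) \<le> (B u + B v)/2"
  shows "convex_on D B"
proof (rule convex_onI[OF _ convD])
  fix t :: real and x y assume t: "t > 0" "t < 1" and x: "x \<in> D" and y: "y \<in> D"
  define g where "g s = B ((1-s) *\<^sub>R x + s *\<^sub>R y)" for s
  have seg: "(1-s) *\<^sub>R x + s *\<^sub>R y \<in> D" if "s \<in> {0..1}" for s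
    using convexD[OF convD x y, of "1-s" s] that by auto
  have "continuous_on {0..1} g"
    unfolding g_def by (rule fin_dim_continuous_on_segment[OF contB seg])
  moreover have "g ((a+b)/2) \<le> (g a + g b)/2" if "a \<in> {0..1}" "b \<in> {0..1}" for a b
  proof -
    have "(1 - (a+b)/2) *\<^sub>R x + ((a+b)/2) *\<^sub>R y
        = midpoint ((1-a) *\<^sub>R x + a *\<^sub>R y) ((1-b) *\<^sub>R x + b *\<^sub>R y)"
      by (simp add: midpoint_def algebra_simps scaleR_add_left[symmetric] del: scaleR_add_left)
    then show ?thesis unfolding g_def using mc[OF seg[OF that(1)] seg[OF that(2)]] by simp
  qed
  ultimately have "g t \<le> (1-t) * g 0 + t * g 1"
    by (rule continuous_midpoint_convex_below_chord) (use t in auto)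
  then show "B ((1 - t) *\<^sub>R x + t *\<^sub>R y) \<le> (1 - t) * B x + t * B y" by (simp add: g_def)
qed

definition midpoint_gain ::
    "(real \<times> 'a::real_vector) set \<Rightarrow> (real \<times> 'a \<Rightarrow> real) \<Rightarrow> (real \<times> 'a \<Rightarrow> real) \<Rightarrow> bool" where
  "midpoint_gain D B c \<longleftrightarrow>
     (\<forall>u\<in>D. \<forall>v\<in>D. c (midpoint u v) * (fst u - fst (midpoint u v))^2
        \<le> (B u + B v)/2 - B (midpoint u v))"

lemma midpoint_gain_two_point_half:
  fixes D :: "(real \<times> 'a::real_vector) set"
  assumes convD: "convex D" and cvx: "convex_on D B" and gain: "midpoint_gain D B c"
    and P: "P \<in> D" and Q: "Q \<in> D" and \<alpha>: "0 < \<alpha>" "\<alpha> \<le> 1/2"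
    and x: "x = \<alpha> *\<^sub>R P + (1-\<alpha>) *\<^sub>R Q"
  shows "2*(1-\<alpha>) * c x * (fst Q - fst x)^2 \<le> \<alpha> * B P + (1-\<alpha>) * B Q - B x"
proof -
  \<comment> \<open>Q' is the reflection of Q in x; it lies on [x, P] since \<alpha> \<le> 1/2.\<close>
  define l where "l = \<alpha>/(1-\<alpha>)"
  have l01: "0 \<le> l" "l \<le> 1" using \<alpha> unfolding l_def by (auto simp: field_simps)
  have la: "l*(1-\<alpha>) = \<alpha>" using \<alpha> unfolding l_def by simp
  have xD: "x \<in> D" using convexD[OF convD P Q, of \<alpha> "1-\<alpha>"] \<alpha> x by auto
  define Q' where "Q' = (1-l) *\<^sub>R x + l *\<^sub>R P"
  have Q'D: "Q' \<in> D" using convexD[OF convD xD P, of "1-l" l] l01 unfolding Q'_def by auto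
  have "Q' = ((1-l)*\<alpha> + l) *\<^sub>R P + ((1-l)*(1-\<alpha>)) *\<^sub>R Q"
    unfolding Q'_def x by (simp add: algebra_simps)
  moreover have "(1-l)*\<alpha> + l = 2*\<alpha>" and "(1-l)*(1-\<alpha>) = 1 - 2*\<alpha>"
    using la by (auto simp: algebra_simps)
  ultimately have Q'_eq: "Q' = (2*\<alpha>) *\<^sub>R P + (1 - 2*\<alpha>) *\<^sub>R Q" by simp
  have xm: "midpoint Q Q' = x"
    unfolding x Q'_eq by (simp add: midpoint_def algebra_simps scaleR_add_left[symmetric] del: scaleR_add_left)
  have m: "c x * (fst Q - fst x)^2 \<le> (B Q + B Q')/2 - B x"
    using bspec[OF bspec[OF gain[unfolded midpoint_gain_def] Q] Q'D] unfolding xm .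
  have cv: "B Q' \<le> (1-l) * B x + l * B P"
    using convex_onD[OF cvx, of l x P] l01 xD P unfolding Q'_def by simp
  have "(1-\<alpha>) * (2 * (c x * (fst Q - fst x)^2)) \<le> (1-\<alpha>) * (B Q + l * B P - (1+l) * B x)"
    using m cv \<alpha> by (intro mult_left_mono) (auto simp: algebra_simps)
  also have "\<dots> = (1-\<alpha>) * B Q + (l*(1-\<alpha>)) * B P - (1-\<alpha>) * B x - (l*(1-\<alpha>)) * B x"
    by (simp add: algebra_simps)
  also have "\<dots> = \<alpha> * B P + (1-\<alpha>) * B Q - B x"
    unfolding la by (simp add: algebra_simps)
  finally show ?thesis by (simp add: algebra_simps)
qed

lemma midpoint_gain_two_point:
  fixes D :: "(real \<times> 'a::real_vector) set"
  assumes convD: "convex D" and cvx: "convex_on D B" and gain: "midpoint_gain D B c"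
    and P: "P \<in> D" and Q: "Q \<in> D" and \<alpha>: "0 < \<alpha>" "\<alpha> < 1"
    and x: "x = \<alpha> *\<^sub>R P + (1-\<alpha>) *\<^sub>R Q" and c: "c x \<ge> 0"
  shows "c x * (\<alpha> * (fst P - fst x))^2 \<le> \<alpha> * B P + (1-\<alpha>) * B Q - B x"
proof (cases "\<alpha> \<le> 1/2")
  case True
  have "\<alpha> * (fst P - fst x) = - ((1-\<alpha>) * (fst Q - fst x))"
    unfolding x by (simp add: algebra_simps)
  then have "c x * (\<alpha> * (fst P - fst x))^2 = (1-\<alpha>)^2 * c x * (fst Q - fst x)^2"
    by (simp add: power_mult_distrib)
  also have "\<dots> \<le> 2*(1-\<alpha>) * c x * (fst Q - fst x)^2"
  proof (intro mult_right_mono)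
    show "(1-\<alpha>)^2 \<le> 2*(1-\<alpha>)"
      unfolding power2_eq_square by (rule mult_right_mono) (use \<alpha> in auto)
  qed (use c in auto)
  also have "\<dots> \<le> \<alpha> * B P + (1-\<alpha>) * B Q - B x"
    by (rule midpoint_gain_two_point_half[OF convD cvx gain P Q \<alpha>(1) True x])
  finally show ?thesis .
next
  case False
  have x': "x = (1-\<alpha>) *\<^sub>R Q + (1 - (1-\<alpha>)) *\<^sub>R P"
    using x by (simp add: add.commute)
  have "c x * (\<alpha> * (fst P - fst x))^2 = \<alpha>^2 * c x * (fst P - fst x)^2"
    by (simp add: power_mult_distrib)
  also have "\<dots> \<le> 2*\<alpha> * c x * (fst P - fst x)^2"
  proof (intro mult_right_mono)
    show "\<alpha>^2 \<le> 2*\<alpha>"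
      unfolding power2_eq_square by (rule mult_right_mono) (use \<alpha> in auto)
  qed (use c in auto)
  also have "\<dots> \<le> (1-\<alpha>) * B Q + \<alpha> * B P - B x"
    using midpoint_gain_two_point_half[OF convD cvx gain Q P _ _ x'] False \<alpha> by simp
  finally show ?thesis by simp
qed

lemma convex_on_barycentre:
  fixes B :: "'v::real_vector \<Rightarrow> real"
  assumes convD: "convex D" and cvx: "convex_on D B" and fin: "finite J"
    and z: "\<And>k. k \<in> J \<Longrightarrow> z k \<in> D" and \<gamma>: "\<And>k. k \<in> J \<Longrightarrow> \<gamma> k \<ge> 0"
    and pos: "sum \<gamma> J > 0"
  obtains P where "P \<in> D" "sum \<gamma> J *\<^sub>R P = (\<Sum>k\<in>J. \<gamma> k *\<^sub>R z k)"
    "sum \<gamma> J * B P \<le> (\<Sum>k\<in>J. \<gamma> k * B (z k))"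
proof
  define a where "a = sum \<gamma> J"
  define P where "P = (\<Sum>k\<in>J. (\<gamma> k / a) *\<^sub>R z k)"
  have one: "(\<Sum>k\<in>J. \<gamma> k / a) = 1"
    using pos unfolding a_def by (simp add: sum_divide_distrib[symmetric])
  have nonneg: "\<And>k. k \<in> J \<Longrightarrow> \<gamma> k / a \<ge> 0" using \<gamma> pos unfolding a_def by simp
  have ne: "J \<noteq> {}" using one by auto
  show "P \<in> D" unfolding P_def by (rule convex_sum[OF fin convD one nonneg z])
  show "a *\<^sub>R P = (\<Sum>k\<in>J. \<gamma> k *\<^sub>R z k)"
    unfolding P_def scaleR_sum_right using pos unfolding a_def by simp
  have "B P \<le> (\<Sum>k\<in>J. (\<gamma> k / a) * B (z k))"
    unfolding P_def by (rule convex_on_sum[OF fin ne cvx one nonneg z])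
  then have "a * B P \<le> a * (\<Sum>k\<in>J. (\<gamma> k / a) * B (z k))" using pos unfolding a_def by simp
  also have "\<dots> = (\<Sum>k\<in>J. \<gamma> k * B (z k))" unfolding sum_distrib_left using pos unfolding a_def by simp
  finally show "a * B P \<le> (\<Sum>k\<in>J. \<gamma> k * B (z k))" .
qed

lemma sum_deviation_above_below_mean:
  fixes \<gamma> a :: "'i \<Rightarrow> real"
  assumes fin: "finite I" and one: "sum \<gamma> I = 1" and m: "m = (\<Sum>k\<in>I. \<gamma> k * a k)"
  shows "(\<Sum>k\<in>{k\<in>I. m \<le> a k}. \<gamma> k * (a k - m)) = (\<Sum>k\<in>I. \<gamma> k * \<bar>a k - m\<bar>) / 2"
    and "(\<Sum>k\<in>{k\<in>I. a k < m}. \<gamma> k * (m - a k)) = (\<Sum>k\<in>I. \<gamma> k * \<bar>a k - m\<bar>) / 2"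
proof -
  define U where "U = (\<Sum>k\<in>{k\<in>I. m \<le> a k}. \<gamma> k * (a k - m))"
  define L where "L = (\<Sum>k\<in>{k\<in>I. a k < m}. \<gamma> k * (m - a k))"
  have split: "(\<Sum>k\<in>I. h k) = (\<Sum>k\<in>{k\<in>I. m \<le> a k}. h k) + (\<Sum>k\<in>{k\<in>I. a k < m}. h k)"
    for h :: "'i \<Rightarrow> real"
  proof -
    have "I = {k\<in>I. m \<le> a k} \<union> {k\<in>I. a k < m}" "{k\<in>I. m \<le> a k} \<inter> {k\<in>I. a k < m} = {}"
      by auto
    then show ?thesis using sum.union_disjoint[of "{k\<in>I. m \<le> a k}" "{k\<in>I. a k < m}" h] fin
      by simp
  qed
  have "0 = (\<Sum>k\<in>I. \<gamma> k * a k) - (\<Sum>k\<in>I. \<gamma> k) * m" using one m by simp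
  also have "\<dots> = (\<Sum>k\<in>I. \<gamma> k * (a k - m))"
    by (simp add: right_diff_distrib sum_subtractf sum_distrib_right)
  also have "\<dots> = U - L"
    unfolding split U_def L_def by (simp add: algebra_simps sum_subtractf sum_negf)
  finally have "U = L" by simp
  moreover have "(\<Sum>k\<in>I. \<gamma> k * \<bar>a k - m\<bar>) = U + L"
    unfolding split U_def L_def by (intro arg_cong2[where f="(+)"] sum.cong) auto
  ultimately show "U = (\<Sum>k\<in>I. \<gamma> k * \<bar>a k - m\<bar>) / 2" "L = (\<Sum>k\<in>I. \<gamma> k * \<bar>a k - m\<bar>) / 2"
    by simp_all
qed

lemma convex_on_split_at_mean:
  fixes D :: "(real \<times> 'a::real_vector) set"
  assumes convD: "convex D" and cvx: "convex_on D B" and fin: "finite I"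
    and z: "\<And>k. k \<in> I \<Longrightarrow> z k \<in> D" and \<gamma>: "\<And>k. k \<in> I \<Longrightarrow> \<gamma> k \<ge> 0"
    and one: "sum \<gamma> I = 1" and x: "x = (\<Sum>k\<in>I. \<gamma> k *\<^sub>R z k)"
    and spread: "(\<Sum>k\<in>I. \<gamma> k * \<bar>fst (z k) - fst x\<bar>) > 0"
  obtains \<alpha> P Q where "P \<in> D" "Q \<in> D" "0 < \<alpha>" "\<alpha> < 1" "x = \<alpha> *\<^sub>R P + (1-\<alpha>) *\<^sub>R Q"
    "\<alpha> * (fst P - fst x) = (\<Sum>k\<in>I. \<gamma> k * \<bar>fst (z k) - fst x\<bar>) / 2"
    "\<alpha> * B P + (1-\<alpha>) * B Q \<le> (\<Sum>k\<in>I. \<gamma> k * B (z k))"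
proof -
  define f where "f = fst x"
  define S where "S = (\<Sum>k\<in>I. \<gamma> k * \<bar>fst (z k) - f\<bar>)"
  define Ip where "Ip = {k\<in>I. f \<le> fst (z k)}"
  define Im where "Im = {k\<in>I. fst (z k) < f}"
  have f: "f = (\<Sum>k\<in>I. \<gamma> k * fst (z k))" unfolding f_def x fst_sum by simp
  have Sp: "(\<Sum>k\<in>Ip. \<gamma> k * (fst (z k) - f)) = S / 2"
    and Sm: "(\<Sum>k\<in>Im. \<gamma> k * (f - fst (z k))) = S / 2"
    unfolding Ip_def Im_def S_def by (rule sum_deviation_above_below_mean[OF fin one f])+
  have finp: "finite Ip" and finm: "finite Im" using fin unfolding Ip_def Im_def by auto
  have parts: "I = Ip \<union> Im" "Ip \<inter> Im = {}" unfolding Ip_def Im_def by auto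
  note split = sum.union_disjoint[OF finp finm parts(2), folded parts(1)]
  \<comment> \<open>Each side of the mean carries half of the spread S > 0, hence positive weight.\<close>
  have pos: "0 < sum \<gamma> J" if "J \<subseteq> I" "(\<Sum>k\<in>J. \<gamma> k * h k) \<noteq> 0" for J h
  proof (rule ccontr)
    assume "\<not> 0 < sum \<gamma> J"
    moreover have nn: "\<And>k. k \<in> J \<Longrightarrow> \<gamma> k \<ge> 0" using that(1) \<gamma> by auto
    ultimately have "sum \<gamma> J = 0" using sum_nonneg[of J \<gamma>] by force
    then have "\<forall>k\<in>J. \<gamma> k = 0"
      using sum_nonneg_eq_0_iff[OF finite_subset[OF that(1) fin]] nn by blast
    then show False using that(2) by simp
  qed
  have Spos: "S > 0" using spread unfolding S_def f_def .
  have posp: "0 < sum \<gamma> Ip" by (rule pos[of Ip "\<lambda>k. fst (z k) - f"]) (use Sp Spos in \<open>auto simp: Ip_def\<close>)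
  have posm: "0 < sum \<gamma> Im" by (rule pos[of Im "\<lambda>k. f - fst (z k)"]) (use Sm Spos in \<open>auto simp: Im_def\<close>)
  obtain P where P: "P \<in> D" "sum \<gamma> Ip *\<^sub>R P = (\<Sum>k\<in>Ip. \<gamma> k *\<^sub>R z k)"
      "sum \<gamma> Ip * B P \<le> (\<Sum>k\<in>Ip. \<gamma> k * B (z k))"
    by (rule convex_on_barycentre[OF convD cvx finp _ _ posp]) (use z \<gamma> in \<open>auto simp: Ip_def\<close>)
  obtain Q where Q: "Q \<in> D" "sum \<gamma> Im *\<^sub>R Q = (\<Sum>k\<in>Im. \<gamma> k *\<^sub>R z k)"
      "sum \<gamma> Im * B Q \<le> (\<Sum>k\<in>Im. \<gamma> k * B (z k))"
    by (rule convex_on_barycentre[OF convD cvx finm _ _ posm]) (use z \<gamma> in \<open>auto simp: Im_def\<close>)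
  define \<alpha> where "\<alpha> = sum \<gamma> Ip"
  have \<beta>: "sum \<gamma> Im = 1 - \<alpha>" using split[of \<gamma>] one unfolding \<alpha>_def by simp
  show thesis
  proof
    show "P \<in> D" "Q \<in> D" by (fact P(1) Q(1))+
    show "0 < \<alpha>" "\<alpha> < 1" using posp posm \<beta> unfolding \<alpha>_def by auto
    show "x = \<alpha> *\<^sub>R P + (1-\<alpha>) *\<^sub>R Q"
      using \<beta> unfolding x split[of "\<lambda>k. \<gamma> k *\<^sub>R z k"] P(2)[symmetric] Q(2)[symmetric] \<alpha>_def
      by simp
    have "\<alpha> * fst P = (\<Sum>k\<in>Ip. \<gamma> k * fst (z k))"
      using arg_cong[OF P(2), of fst] unfolding \<alpha>_def fst_sum by simp
    then have "\<alpha> * (fst P - f) = (\<Sum>k\<in>Ip. \<gamma> k * (fst (z k) - f))"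
      unfolding \<alpha>_def by (simp add: algebra_simps sum_subtractf sum_distrib_left)
    then show "\<alpha> * (fst P - fst x) = (\<Sum>k\<in>I. \<gamma> k * \<bar>fst (z k) - fst x\<bar>) / 2"
      using Sp unfolding S_def f_def by simp
    show "\<alpha> * B P + (1-\<alpha>) * B Q \<le> (\<Sum>k\<in>I. \<gamma> k * B (z k))"
      using P(3) Q(3)[unfolded \<beta>] split[of "\<lambda>k. \<gamma> k * B (z k)"] unfolding \<alpha>_def by linarith
  qed
qed

lemma convex_on_jensen_midpoint_gain:
  fixes D :: "(real \<times> 'a::real_vector) set"
  assumes convD: "convex D" and cvx: "convex_on D B" and gain: "midpoint_gain D B c"
    and fin: "finite I" and z: "\<And>k. k \<in> I \<Longrightarrow> z k \<in> D" and \<gamma>: "\<And>k. k \<in> I \<Longrightarrow> \<gamma> k \<ge> 0"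
    and one: "sum \<gamma> I = 1" and x: "x = (\<Sum>k\<in>I. \<gamma> k *\<^sub>R z k)"
  shows "1/4 * c x * (\<Sum>k\<in>I. \<gamma> k * \<bar>fst (z k) - fst x\<bar>)^2 \<le> (\<Sum>k\<in>I. \<gamma> k * B (z k)) - B x"
proof -
  define S where "S = (\<Sum>k\<in>I. \<gamma> k * \<bar>fst (z k) - fst x\<bar>)"
  have "I \<noteq> {}" using one by auto
  then have jensen: "B x \<le> (\<Sum>k\<in>I. \<gamma> k * B (z k))"
    unfolding x by (rule convex_on_sum[OF fin _ cvx one \<gamma> z])
  have "S \<ge> 0" unfolding S_def using \<gamma> by (intro sum_nonneg) auto
  then consider "1/4 * c x * S^2 \<le> 0" | "c x \<ge> 0" "S > 0"
    by (cases "c x < 0 \<or> S = 0") (auto simp: mult_nonpos_nonneg)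
  then show ?thesis
  proof cases
    case 1
    then show ?thesis using jensen unfolding S_def by linarith
  next
    case 2
    obtain \<alpha> P Q where P: "P \<in> D" and Q: "Q \<in> D" and \<alpha>: "0 < \<alpha>" "\<alpha> < 1"
      and xPQ: "x = \<alpha> *\<^sub>R P + (1-\<alpha>) *\<^sub>R Q" and dev: "\<alpha> * (fst P - fst x) = S / 2"
      and cluster: "\<alpha> * B P + (1-\<alpha>) * B Q \<le> (\<Sum>k\<in>I. \<gamma> k * B (z k))"
      by (rule convex_on_split_at_mean[OF convD cvx fin z \<gamma> one x]) (use 2 in \<open>auto simp: S_def\<close>)
    have "c x * (S / 2)^2 \<le> \<alpha> * B P + (1-\<alpha>) * B Q - B x"
      using midpoint_gain_two_point[OF convD cvx gain P Q \<alpha> xPQ 2(1)] unfolding dev .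
    then show ?thesis using cluster unfolding S_def by (simp add: power_divide)
  qed
qed

lemma sum_scaleR_Pair: "(\<Sum>k\<in>A. w k *\<^sub>R ((fs k, Ns k) :: real \<times> 'a::real_vector))
   = (\<Sum>k\<in>A. w k * fs k, \<Sum>k\<in>A. w k *\<^sub>R Ns k)"
  by (rule prod_eqI) (simp_all add: fst_sum snd_sum)

theorem lemma6p5:
  fixes D :: "(real \<times> 'a::real_vector) set"
    and B :: "real \<times> 'a \<Rightarrow> real"
    and c :: "real \<times> 'a \<Rightarrow> real"
  assumes convD: "convex D"
    and contB: "fin_dim_continuous D B"
    and mid: "\<And>f N fp Np fm Nm.
       (f, N) \<in> D \<Longrightarrow> (fp, Np) \<in> D \<Longrightarrow> (fm, Nm) \<in> D \<Longrightarrow>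
       f = (fp + fm) / 2 \<Longrightarrow> N = (1/2) *\<^sub>R (Np + Nm) \<Longrightarrow>
       (B (fp, Np) + B (fm, Nm)) / 2 - B (f, N) \<ge> c (f, N) * \<bar>fp - f\<bar>^2
       \<and> c (f, N) * \<bar>fp - f\<bar>^2 \<ge> 0"
  shows "\<And>(n::nat) (fs :: nat \<Rightarrow> real) (Ns :: nat \<Rightarrow> 'a) (\<gamma> :: nat \<Rightarrow> real).
       (\<forall>k\<in>{1..n}. (fs k, Ns k) \<in> D \<and> \<gamma> k \<ge> 0) \<Longrightarrow>
       (\<Sum>k=1..n. \<gamma> k) = 1 \<Longrightarrow>
       - B (\<Sum>k=1..n. \<gamma> k * fs k, \<Sum>k=1..n. \<gamma> k *\<^sub>R Ns k)
         + (\<Sum>k=1..n. \<gamma> k * B (fs k, Ns k))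
       \<ge> 1/4 * c (\<Sum>k=1..n. \<gamma> k * fs k, \<Sum>k=1..n. \<gamma> k *\<^sub>R Ns k)
           * (\<Sum>k=1..n. \<gamma> k * \<bar>fs k - (\<Sum>j=1..n. \<gamma> j * fs j)\<bar>)^2"
proof -
  have mid_uv: "c (midpoint u v) * (fst u - fst (midpoint u v))^2 \<le> (B u + B v)/2 - B (midpoint u v)
      \<and> 0 \<le> c (midpoint u v) * (fst u - fst (midpoint u v))^2" if "u \<in> D" "v \<in> D" for u v
  proof -
    have "midpoint u v \<in> D"
      using convexD[OF convD that, of "1/2" "1/2"] by (simp add: midpoint_def scaleR_add_right)
    moreover have "midpoint u v = ((fst u + fst v) / 2, (1/2) *\<^sub>R (snd u + snd v))"
      by (simp add: midpoint_def prod_eq_iff)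
    ultimately show ?thesis using mid[of _ _ "fst u" "snd u" "fst v" "snd v"] that by simp
  qed
  then have gain: "midpoint_gain D B c" unfolding midpoint_gain_def by blast
  have cvx: "convex_on D B"
  proof (rule midpoint_convex_imp_convex_on[OF convD contB])
    fix u v assume "u \<in> D" "v \<in> D"
    from mid_uv[OF this] show "B (midpoint u v) \<le> (B u + B v)/2" by linarith
  qed
  fix n :: nat and fs :: "nat \<Rightarrow> real" and Ns :: "nat \<Rightarrow> 'a" and \<gamma> :: "nat \<Rightarrow> real"
  assume H: "\<forall>k\<in>{1..n}. (fs k, Ns k) \<in> D \<and> \<gamma> k \<ge> 0" and one: "(\<Sum>k=1..n. \<gamma> k) = 1"
  from convex_on_jensen_midpoint_gain[OF convD cvx gain _ _ _ one sum_scaleR_Pair[symmetric], of fs Ns] H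
  show "?thesis n fs Ns \<gamma>" by simp
qed

end
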